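(* Let $n\ge2$, let $W:\{0,1,\dots,n\}\to\mathbb{R}$ be nonnegative, nondecreasing and concave with $W(0)=0$, and let $\rho\ge1$. Define $F:\{1,\dots,n\}\to\mathbb{R}$ by $F(1)=W(1)$ and, for $j=1,\dots,n-1$, $$F(j+1)=\max_{\ell\in\{1,\dots,n\}}\frac{\min\{j,n-\ell\}F(j)-W(j)\rho+W(\ell)}{\min\{\ell,n-j\}}.$$ If $\hat j\in\{1,\dots,n-1\}$ is the smallest index with $F(\hat j+1)>F(\hat j)$, then $F(j+1)>F(j)$ for all $j=\hat j,\dots,n-1$. *)

theory Defs
  imports Main "HOL.Real"
begin

definition concave_on_grid :: "nat \<Rightarrow> (nat \<Rightarrow> real) \<Rightarrow> bool" where
  "concave_on_grid n W \<longleftrightarrow>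
     (\<forall>j. 1 \<le> j \<longrightarrow> j + 1 \<le> n \<longrightarrow> W (j + 1) - W j \<le> W j - W (j - 1))"

text \<open>The sequence F(1), ..., F(n); the value at 0 is an unused dummy.\<close>
fun Fseq :: "nat \<Rightarrow> (nat \<Rightarrow> real) \<Rightarrow> real \<Rightarrow> nat \<Rightarrow> real" where
  "Fseq n W \<rho> 0 = 0"
| "Fseq n W \<rho> (Suc 0) = W 1"
| "Fseq n W \<rho> (Suc (Suc i)) =
     Max ((\<lambda>l. (real (min (Suc i) (n - l)) * Fseq n W \<rho> (Suc i) - W (Suc i) * \<rho> + W l)
                / real (min l (n - Suc i))) ` {1..n})"

end

theory Submission
  imports Defs
begin

text \<open>
  Write \<open>e\<^sub>j(l) = W(l) - \<rho> W(j) - (l - j) F(j)\<close>. The recursion says precisely that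
  \<open>e\<^sub>j(l) \<le> min{l, n-j} (F(j+1) - F(j))\<close>, with equality at a maximising \<open>l\<close>. So \<open>F(j+1) > F(j)\<close>
  exactly when \<open>e\<^sub>j(l) > 0\<close> for some \<open>l\<close>. By induction on \<open>j\<close>, \<open>e\<^sub>j(l) \<le> 0\<close> for all \<open>l > j\<close>,
  and \<open>e\<^sub>j(j) \<le> 0\<close> since \<open>\<rho> \<ge> 1\<close>; hence a witness of growth has \<open>l < j\<close>. By concavity such a
  witness stays a witness for \<open>j + 1\<close>, so growth, once started, never stops.
\<close>

lemma concave_on_grid_increment_antimono:
  assumes "concave_on_grid n W" "i \<le> i'" "i' + 1 \<le> n"
  shows "W (i' + 1) - W i' \<le> W (i + 1) - W i"
  using assms(2,3)
proof (induction i' rule: dec_induct)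
  case (step k)
  have "W (Suc k + 1) - W (Suc k) \<le> W (Suc k) - W k"
    using spec[OF assms(1)[unfolded concave_on_grid_def], of "Suc k"] step.prems by simp
  with step show ?case by simp
qed simp

lemma concave_on_grid_diff_le_first_increment:
  assumes "concave_on_grid n W" "j + d \<le> n"
  shows "W (j + d) - W j \<le> real d * (W (j + 1) - W j)"
  using assms(2)
proof (induction d)
  case (Suc d)
  have "W (j + d + 1) - W (j + d) \<le> W (j + 1) - W j"
    using concave_on_grid_increment_antimono[OF assms(1), of j "j + d"] Suc.prems by simp
  with Suc show ?case by (simp add: algebra_simps)
qed simp

lemma concave_on_grid_diff_ge_last_increment:
  assumes "concave_on_grid n W" "l + d + 1 \<le> n"
  shows "real d * (W (l + d + 1) - W (l + d)) \<le> W (l + d) - W l"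
  using assms(2)
proof (induction d)
  case (Suc d)
  have decr: "W (l + d + 2) - W (l + d + 1) \<le> W (l + d + 1) - W (l + d)"
    using concave_on_grid_increment_antimono[OF assms(1), of "l + d" "l + d + 1"] Suc.prems by simp
  then have "real d * (W (l + d + 2) - W (l + d + 1)) \<le> real d * (W (l + d + 1) - W (l + d))"
    by (simp add: mult_left_mono)
  with Suc decr show ?case by (simp add: algebra_simps)
qed simp

lemma min_diff_eq: "j < n \<Longrightarrow> l \<le> n \<Longrightarrow>
    real (min l (n - j)) = real (min j (n - l)) + (real l - real j)"
  by (cases "l + j \<le> n") auto

locale concave_weight =
  fixes n :: nat and W :: "nat \<Rightarrow> real" and \<rho> :: real
  assumes W_mono: "\<forall>i j. i \<le> j \<longrightarrow> j \<le> n \<longrightarrow> W i \<le> W j"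
    and W_concave: "concave_on_grid n W"
    and W_0: "W 0 = 0"
    and \<rho>_ge_1: "\<rho> \<ge> 1"
begin

abbreviation F :: "nat \<Rightarrow> real" where "F \<equiv> Fseq n W \<rho>"

definition candidate :: "nat \<Rightarrow> nat \<Rightarrow> real" where
  "candidate j l = (real (min j (n - l)) * F j - W j * \<rho> + W l) / real (min l (n - j))"

definition excess :: "nat \<Rightarrow> nat \<Rightarrow> real" where
  "excess j l = W l - \<rho> * W j - (real l - real j) * F j"

lemma W_nonneg: "j \<le> n \<Longrightarrow> W j \<ge> 0"
  using W_mono W_0 le0 by metis

lemma W_le_\<rho>_W: "j \<le> n \<Longrightarrow> W j \<le> \<rho> * W j"
  using mult_right_mono[OF \<rho>_ge_1 W_nonneg] by simp

lemma excess_self_nonpos: "j \<le> n \<Longrightarrow> excess j j \<le> 0"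
  using W_le_\<rho>_W by (simp add: excess_def)

lemma excess_eq_increment:
  assumes "j < n" "l \<le> n" "1 \<le> l"
  shows "excess j l = real (min l (n - j)) * (candidate j l - F j)"
proof -
  have "real (min l (n - j)) \<noteq> 0" using assms by simp
  then have "real (min l (n - j)) * (candidate j l - F j)
    = real (min j (n - l)) * F j - W j * \<rho> + W l - real (min l (n - j)) * F j"
    by (simp add: candidate_def right_diff_distrib)
  also have "\<dots> = excess j l"
    unfolding min_diff_eq[OF assms(1,2)] by (simp add: excess_def algebra_simps)
  finally show ?thesis ..
qed

lemma F_Suc_eq_Max: "1 \<le> j \<Longrightarrow> F (j + 1) = Max (candidate j ` {1..n})"
  by (cases j) (auto simp: candidate_def)

lemma excess_le_increment:
  assumes "1 \<le> j" "j < n" "1 \<le> l" "l \<le> n"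
  shows "excess j l \<le> real (min l (n - j)) * (F (j + 1) - F j)"
proof -
  have "candidate j l \<le> F (j + 1)"
    unfolding F_Suc_eq_Max[OF assms(1)] using assms(3,4) by (intro Max_ge) auto
  then show ?thesis
    unfolding excess_eq_increment[OF assms(2,4,3)] by (simp add: mult_left_mono)
qed

lemma excess_eq_increment_at_maximiser:
  assumes "1 \<le> j" "j < n"
  obtains l where "1 \<le> l" "l \<le> n" "excess j l = real (min l (n - j)) * (F (j + 1) - F j)"
proof -
  have "Max (candidate j ` {1..n}) \<in> candidate j ` {1..n}"
    using assms by (intro Max_in) auto
  then obtain l where l: "1 \<le> l" "l \<le> n" and "F (j + 1) = candidate j l"
    using F_Suc_eq_Max[OF assms(1)] by auto
  then have "excess j l = real (min l (n - j)) * (F (j + 1) - F j)"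
    using excess_eq_increment[OF assms(2) l(2,1)] by simp
  with l show ?thesis by (rule that)
qed

lemma excess_pos_imp_F_increases:
  assumes "1 \<le> j" "j < n" "1 \<le> l" "l \<le> n" "excess j l > 0"
  shows "F j < F (j + 1)"
proof (rule ccontr)
  assume "\<not> F j < F (j + 1)"
  then have "real (min l (n - j)) * (F (j + 1) - F j) \<le> 0"
    by (simp add: mult_nonneg_nonpos)
  with excess_le_increment[OF assms(1-4)] assms(5) show False by simp
qed

lemma excess_nonpos_above:
  assumes "1 \<le> j" "j < l" "l \<le> n"
  shows "excess j l \<le> 0"
  using assms
proof (induction j arbitrary: l rule: dec_induct)
  case base
  then have "W l \<le> real l * W 1"
    using concave_on_grid_diff_le_first_increment[OF W_concave, of 0 l] W_0 by simp
  moreover have "W 1 \<le> \<rho> * W 1"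
    using W_le_\<rho>_W base by simp
  ultimately show ?case
    by (simp add: excess_def algebra_simps)
next
  case (step j l)
  note l = step.prems
  define t where "t = real l - real j"
  define X where "X = W l - \<rho> * W j"
  define D where "D = W (j + 1) - W j"
  have "t \<ge> 2" using l by (simp add: t_def)
  have IH: "X \<le> t * F j"
    using step.IH[of l] l by (simp add: excess_def X_def t_def)
  have X_le_tFSuc: "X \<le> t * F (j + 1)"
  proof (cases "F j \<le> F (j + 1)")
    case True
    with IH \<open>t \<ge> 2\<close> show ?thesis using mult_left_mono[of "F j" "F (j + 1)" t] by linarith
  next
    case False
    have "t \<le> real (min l (n - j))" using l by (simp add: t_def)
    then have "real (min l (n - j)) * (F (j + 1) - F j) \<le> t * (F (j + 1) - F j)"
      using False by (simp add: mult_right_mono_neg)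
    with excess_le_increment[of j l] step.hyps l show ?thesis
      by (simp add: excess_def X_def t_def algebra_simps)
  qed
  have "W l - W j \<le> t * D"
    using concave_on_grid_diff_le_first_increment[OF W_concave, of j "l - j"] l
    by (simp add: t_def D_def of_nat_diff)
  moreover have "t * D \<le> t * (\<rho> * D)"
  proof -
    have "D \<ge> 0" using W_mono l by (simp add: D_def)
    then have "D \<le> \<rho> * D" using mult_right_mono[OF \<rho>_ge_1] by simp
    with \<open>t \<ge> 2\<close> show ?thesis by (simp add: mult_left_mono)
  qed
  ultimately have X_le_t\<rho>D: "X \<le> t * (\<rho> * D)"
    using W_le_\<rho>_W[of j] l unfolding X_def by linarith
  \<comment> \<open>split \<open>X\<close> as \<open>X/t + (t - 1) X/t\<close> and bound the two parts separately\<close>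
  have "X - \<rho> * D \<le> (t - 1) * F (j + 1)"
  proof -
    have "X - \<rho> * D \<le> X - X / t" using X_le_t\<rho>D \<open>t \<ge> 2\<close> by (simp add: divide_le_eq mult.commute)
    also have "\<dots> = (t - 1) * (X / t)" using \<open>t \<ge> 2\<close> by (simp add: field_simps)
    also have "\<dots> \<le> (t - 1) * F (j + 1)"
      using X_le_tFSuc \<open>t \<ge> 2\<close> by (intro mult_left_mono) (simp_all add: divide_le_eq mult.commute)
    finally show ?thesis .
  qed
  then show ?case
    by (simp add: excess_def X_def D_def t_def algebra_simps)
qed

lemma excess_pos_Suc:
  assumes l: "1 \<le> l" "l < j" and "j < n" and pos: "excess j l > 0"
  shows "excess (j + 1) l > 0"
proof -
  define d where "d = j - l"
  define D where "D = W (j + 1) - W j"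
  have j_eq: "j = l + d" and "d \<ge> 1" using l by (simp_all add: d_def)
  have F_incr: "F j < F (j + 1)"
    using excess_pos_imp_F_increases[of j l] assms by simp
  have "real d * D \<le> W j - W l"
    using concave_on_grid_diff_ge_last_increment[OF W_concave, of l d] j_eq \<open>j < n\<close> by (simp add: D_def)
  then have "\<rho> * (real d * D) \<le> \<rho> * (W j - W l)"
    using \<rho>_ge_1 by (simp add: mult_left_mono)
  then have "real d * (\<rho> * D) \<le> \<rho> * W j - W l"
    using W_le_\<rho>_W[of l] l \<open>j < n\<close> by (simp add: algebra_simps)
  also have "\<dots> < real d * F j"
    using pos j_eq by (simp add: excess_def algebra_simps)
  finally have "\<rho> * D < F j"
    using \<open>d \<ge> 1\<close> by simp
  have "excess (j + 1) l = excess j l + (F (j + 1) - \<rho> * D) + real d * (F (j + 1) - F j)"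
    using j_eq by (simp add: excess_def D_def algebra_simps)
  moreover have "real d * (F (j + 1) - F j) \<ge> 0"
    using F_incr by simp
  ultimately show ?thesis
    using pos F_incr \<open>\<rho> * D < F j\<close> by linarith
qed

lemma F_increases_imp_witness_below:
  assumes "1 \<le> j" "j < n" "F j < F (j + 1)"
  obtains l where "1 \<le> l" "l < j" "excess j l > 0"
proof -
  obtain l where l: "1 \<le> l" "l \<le> n" and eq: "excess j l = real (min l (n - j)) * (F (j + 1) - F j)"
    using excess_eq_increment_at_maximiser assms(1,2) by blast
  have "excess j l > 0"
    unfolding eq using l assms by simp
  moreover have "l \<noteq> j" and "\<not> j < l"
    using excess_self_nonpos[of j] excess_nonpos_above[of j l] assms l \<open>excess j l > 0\<close> by auto
  ultimately show ?thesis using l that by auto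
qed

lemma F_increasing_from:
  assumes "1 \<le> j0" "j0 < n" "F j0 < F (j0 + 1)" "j0 \<le> j" "j < n"
  shows "F j < F (j + 1)"
proof -
  obtain l where l: "1 \<le> l" "l < j0" "excess j0 l > 0"
    using F_increases_imp_witness_below assms(1-3) .
  have "excess j l > 0" using assms(4,5)
  proof (induction j rule: dec_induct)
    case (step k)
    then show ?case using excess_pos_Suc[of l k] l by simp
  qed (rule l(3))
  then show ?thesis
    using excess_pos_imp_F_increases[of j l] l assms by simp
qed

end

theorem lemma3:
  fixes n :: nat and W :: "nat \<Rightarrow> real" and \<rho> :: real and jh :: nat
  assumes "n \<ge> 2"
    and "\<forall>j\<le>n. W j \<ge> 0"
    and "\<forall>i j. i \<le> j \<longrightarrow> j \<le> n \<longrightarrow> W i \<le> W j"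
    and "concave_on_grid n W"
    and "W 0 = 0"
    and "\<rho> \<ge> 1"
    and "jh \<in> {1..n-1}"
    and "Fseq n W \<rho> (jh + 1) > Fseq n W \<rho> jh"
    and "\<forall>j\<in>{1..<jh}. \<not> (Fseq n W \<rho> (j + 1) > Fseq n W \<rho> j)"
  shows "\<forall>j\<in>{jh..n-1}. Fseq n W \<rho> (j + 1) > Fseq n W \<rho> j"
proof -
  interpret concave_weight n W \<rho>
    using assms by unfold_locales auto
  show ?thesis
    using F_increasing_from[of jh] assms(1,7,8) by auto
qed

end
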